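(* Consider the perturbed asynchronous consensus scheme: given $x_i^0\in\mathbb R$, $v_i^t=0$ for $t=-D,\dots,0$, and scalars $\{\delta^k\}$, at iteration $k$ $v_{i^k}^{k+1}=x_{i^k}^k+\delta^k$, $x_{i^k}^{k+1}=w_{i^ki^k}v_{i^k}^{k+1}+\sum_{j\in\mathcal N_{i^k}^{\rm in}}w_{i^kj}v_j^{k-d_j^k}$, and $v_j^{k+1}=v_j^k$, $x_j^{k+1}=x_j^k$ for $j\ne i^k$. Let $\mathbf h^k=[\mathbf x^{k\top},\mathbf v^{k\top},\mathbf v^{k-1\top},\dots,\mathbf v^{k-D\top}]^\top\in\mathbb R^{(D+2)I}$, so that $\mathbf h^{k+1}=\widehat{\mathbf W}^k(\mathbf h^k+\delta^k\mathbf e_{i^k})$. Let $C_2>0$, $\rho\in(0,1)$ and stochastic vectors $\{\boldsymbol\psi^k\}$ satisfy $\|\widehat{\mathbf W}^{k:t}-\mathbf 1\boldsymbol\psi^{t\top}\|\le C_2\rho^{k-t}$ for all $k\ge t\ge0$. Define $\bar h^0=\boldsymbol\psi^{0\top}\mathbf h^0$ and $\bar h^{k+1}=\boldsymbol\psi^{0\top}\mathbf h^0+\sum_{l=0}^k\psi_{i^l}^l\delta^l$. Then for all $k\in\mathbb N_0$, $$\|\mathbf h^{k+1}-\mathbf 1\bar h^{k+1}\|\le C_2\rho^k\|\mathbf h^0-\mathbf 1\bar h^0\|+C_2\sum_{l=0}^k\rho^{k-l}|\delta^l|.$$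
   Context: $\mathcal G=(\mathcal V,\mathcal E)$, $\mathcal V=\{1,\dots,I\}$, digraph without self-loops, $\mathcal N_i^{\rm in}=\{j:(j,i)\in\mathcal E\}$; $\mathbf W=(w_{ij})$ row-stochastic with $w_{ij}=0$ unless $i=j$ or $(j,i)\in\mathcal E$. $(i^k,\mathbf d^k)$ with $i^k\in\mathcal V$, $0\le d_j^k\le D$. $\mathbf e_i$ is the $i$-th canonical vector of $\mathbb R^{(D+2)I}$. Augmented matrix $\widehat{\mathbf W}^k$: entry $(r,m)$ equals $w_{i^ki^k}$ if $r=m=i^k$; $w_{i^kj}$ if $r=i^k$ and $m=j+(d_j^k+1)I$, $j\in\mathcal N^{\rm in}_{i^k}$; $1$ if $r=m\in\{1,\dots,2I\}\setminus\{i^k,i^k+I\}$; $1$ if $r\in\{2I+1,\dots,(D+2)I\}\cup\{i^k+I\}$ and $m=r-I$; $0$ otherwise. $\widehat{\mathbf W}^{k:t}=\widehat{\mathbf W}^k\cdots\widehat{\mathbf W}^t$ ($=\widehat{\mathbf W}^t$ if $k=t$). $\|\cdot\|$ is the Euclidean/spectral norm. *)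

theory Defs
  imports "HOL-Analysis.Analysis"
begin

text \<open>Vertices are 0-based: 0,...,I-1. Vectors of R^n are functions nat => real
  (only entries < n matter), n x n matrices are functions nat => nat => real.\<close>

definition vnorm :: "nat \<Rightarrow> (nat \<Rightarrow> real) \<Rightarrow> real" where
  "vnorm n x = sqrt (\<Sum>r<n. (x r)\<^sup>2)"

definition mvmult :: "nat \<Rightarrow> (nat \<Rightarrow> nat \<Rightarrow> real) \<Rightarrow> (nat \<Rightarrow> real) \<Rightarrow> (nat \<Rightarrow> real)" where
  "mvmult n A x = (\<lambda>r. \<Sum>m<n. A r m * x m)"

definition mmult :: "nat \<Rightarrow> (nat \<Rightarrow> nat \<Rightarrow> real) \<Rightarrow> (nat \<Rightarrow> nat \<Rightarrow> real) \<Rightarrow> (nat \<Rightarrow> nat \<Rightarrow> real)" where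
  "mmult n A B = (\<lambda>r m. \<Sum>l<n. A r l * B l m)"

definition opnorm :: "nat \<Rightarrow> (nat \<Rightarrow> nat \<Rightarrow> real) \<Rightarrow> real" where
  "opnorm n A = Sup {vnorm n (mvmult n A x) | x. vnorm n x \<le> 1}"

definition row_stochastic :: "nat \<Rightarrow> (nat \<Rightarrow> nat \<Rightarrow> real) \<Rightarrow> bool" where
  "row_stochastic n W \<longleftrightarrow> (\<forall>i<n. (\<forall>j<n. W i j \<ge> 0) \<and> (\<Sum>j<n. W i j) = 1)"

definition stochastic_vec :: "nat \<Rightarrow> (nat \<Rightarrow> real) \<Rightarrow> bool" where
  "stochastic_vec n p \<longleftrightarrow> (\<forall>r<n. p r \<ge> 0) \<and> (\<Sum>r<n. p r) = 1"

definition in_nbrs :: "(nat \<times> nat) set \<Rightarrow> nat \<Rightarrow> nat set" where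
  "in_nbrs E i = {j. (j, i) \<in> E}"

text \<open>Augmented matrix hat W^k (0-based version of the paper's definition),
  for active agent ik and delay vector d; size (D+2)I.\<close>
definition Waug :: "nat \<Rightarrow> nat \<Rightarrow> (nat \<times> nat) set \<Rightarrow> (nat \<Rightarrow> nat \<Rightarrow> real)
    \<Rightarrow> nat \<Rightarrow> (nat \<Rightarrow> nat) \<Rightarrow> nat \<Rightarrow> nat \<Rightarrow> real" where
  "Waug I D E W ik d r m =
     (if r = ik \<and> m = ik then W ik ik
      else if r = ik \<and> (\<exists>j\<in>in_nbrs E ik. m = j + (d j + 1) * I)
        then W ik (THE j. j \<in> in_nbrs E ik \<and> m = j + (d j + 1) * I)
      else if r = m \<and> r < 2 * I \<and> r \<noteq> ik \<and> r \<noteq> ik + I then 1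
      else if (2 * I \<le> r \<and> r < (D + 2) * I \<or> r = ik + I) \<and> m + I = r then 1
      else 0)"

text \<open>wprod n A t N = A (t+n) * ... * A t, i.e. hat W^{t+n:t}.\<close>
fun wprod :: "nat \<Rightarrow> (nat \<Rightarrow> nat \<Rightarrow> nat \<Rightarrow> real) \<Rightarrow> nat \<Rightarrow> nat \<Rightarrow> (nat \<Rightarrow> nat \<Rightarrow> real)" where
  "wprod N A t 0 = A t"
| "wprod N A t (Suc n) = mmult N (A (t + Suc n)) (wprod N A t n)"

definition Wprod :: "nat \<Rightarrow> (nat \<Rightarrow> nat \<Rightarrow> nat \<Rightarrow> real) \<Rightarrow> nat \<Rightarrow> nat \<Rightarrow> (nat \<Rightarrow> nat \<Rightarrow> real)" where
  "Wprod N A k t = wprod N A t (k - t)"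

text \<open>Stacked state h^k = [x^k; v^k; v^{k-1}; ...; v^{k-D}].\<close>
definition stack :: "nat \<Rightarrow> (nat \<Rightarrow> nat \<Rightarrow> real) \<Rightarrow> (int \<Rightarrow> nat \<Rightarrow> real) \<Rightarrow> nat \<Rightarrow> nat \<Rightarrow> real" where
  "stack I x v k r = (if r < I then x k r else v (int k - int (r div I - 1)) (r mod I))"

end

theory Submission
  imports Defs
begin

text \<open>Stacking the estimates with the last \<open>D + 1\<close> transmitted values turns the
  asynchronous iteration with delays into the linear recursion
  \<open>h(k+1) = W(k) (h(k) + \<delta>(k) e(i(k)))\<close>, where every \<open>W(k)\<close> has unit row sums.
  Unrolling it expresses \<open>h(k+1)\<close> through the products \<open>W(k:t)\<close>. These products also have
  unit row sums and each \<open>\<psi>(t)\<close> sums to one, so subtracting the running average replaces every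
  \<open>W(k:t)\<close> by \<open>W(k:t) - 1 \<psi>(t)\<^sup>T\<close>, whose norm decays geometrically; the triangle
  inequality then gives the bound.\<close>

lemma vnorm_L2: "vnorm n f = L2_set f {..<n}"
  by (simp add: vnorm_def L2_set_def)

lemma vnorm_nonneg: "vnorm n f \<ge> 0"
  by (simp add: vnorm_L2)

lemma vnorm_cong: "(\<And>r. r < n \<Longrightarrow> f r = g r) \<Longrightarrow> vnorm n f = vnorm n g"
  unfolding vnorm_def by (intro arg_cong[where f=sqrt] sum.cong) auto

lemma vnorm_triangle: "vnorm n (\<lambda>r. f r + g r) \<le> vnorm n f + vnorm n g"
  unfolding vnorm_L2 by (rule L2_set_triangle_ineq)

lemma vnorm_scale: "vnorm n (\<lambda>r. c * f r) = \<bar>c\<bar> * vnorm n f"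
  by (simp add: vnorm_def power_mult_distrib sum_distrib_left[symmetric] real_sqrt_mult)

lemma vnorm_sum_le:
  assumes "finite A"
  shows "vnorm n (\<lambda>r. \<Sum>l\<in>A. g l r) \<le> (\<Sum>l\<in>A. vnorm n (g l))"
  using assms
proof (induction A rule: finite_induct)
  case empty
  then show ?case by (simp add: vnorm_def)
next
  case (insert a F)
  have "vnorm n (\<lambda>r. \<Sum>l\<in>insert a F. g l r) = vnorm n (\<lambda>r. g a r + (\<Sum>l\<in>F. g l r))"
    using insert by simp
  also have "\<dots> \<le> vnorm n (g a) + vnorm n (\<lambda>r. \<Sum>l\<in>F. g l r)"
    by (rule vnorm_triangle)
  also have "\<dots> \<le> vnorm n (g a) + (\<Sum>l\<in>F. vnorm n (g l))"
    using insert by simp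
  finally show ?case
    using insert by simp
qed

definition unit_vec :: "nat \<Rightarrow> nat \<Rightarrow> real" where
  "unit_vec i = (\<lambda>m. if m = i then 1 else 0)"

lemma vnorm_unit_vec:
  assumes "i < n"
  shows "vnorm n (unit_vec i) = 1"
proof -
  have "(\<Sum>r<n. (unit_vec i r)\<^sup>2) = (\<Sum>r<n. unit_vec i r)"
    by (rule sum.cong) (auto simp: unit_vec_def)
  then show ?thesis
    using assms by (simp add: vnorm_def unit_vec_def sum.delta)
qed

lemma sum_unit_vec: "i < n \<Longrightarrow> (\<Sum>m<n. f m * unit_vec i m) = f i"
  by (simp add: unit_vec_def if_distrib sum.delta cong: if_cong)

lemma vnorm_mvmult_le_frobenius:
  "vnorm n (mvmult n M y) \<le> sqrt (\<Sum>r<n. \<Sum>m<n. (M r m)\<^sup>2) * vnorm n y"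
proof -
  have row: "(mvmult n M y r)\<^sup>2 \<le> (\<Sum>m<n. (M r m)\<^sup>2) * (vnorm n y)\<^sup>2" for r
  proof -
    have "\<bar>mvmult n M y r\<bar> \<le> (\<Sum>m<n. \<bar>M r m\<bar> * \<bar>y m\<bar>)"
      unfolding mvmult_def by (rule order_trans[OF sum_abs]) (simp add: abs_mult)
    also have "\<dots> \<le> L2_set (M r) {..<n} * vnorm n y"
      unfolding vnorm_L2 by (rule L2_set_mult_ineq)
    finally have "\<bar>mvmult n M y r\<bar>\<^sup>2 \<le> (L2_set (M r) {..<n} * vnorm n y)\<^sup>2"
      by (intro power_mono) auto
    then show ?thesis
      by (simp add: power_mult_distrib L2_set_def sum_nonneg)
  qed
  have "(\<Sum>r<n. (mvmult n M y r)\<^sup>2) \<le> (\<Sum>r<n. \<Sum>m<n. (M r m)\<^sup>2) * (vnorm n y)\<^sup>2"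
    using sum_mono[of "{..<n}", OF row] by (simp add: sum_distrib_right)
  then have "sqrt (\<Sum>r<n. (mvmult n M y r)\<^sup>2) \<le> sqrt ((\<Sum>r<n. \<Sum>m<n. (M r m)\<^sup>2) * (vnorm n y)\<^sup>2)"
    by (rule real_sqrt_le_mono)
  then show ?thesis
    by (simp add: vnorm_def[of n "mvmult n M y"] real_sqrt_mult vnorm_nonneg)
qed

lemma mvmult_scale: "mvmult n A (\<lambda>m. c * f m) r = c * mvmult n A f r"
  by (simp add: mvmult_def sum_distrib_left mult_ac)

lemma mvmult_add: "mvmult n A (\<lambda>m. f m + g m) r = mvmult n A f r + mvmult n A g r"
  by (simp add: mvmult_def distrib_left sum.distrib)

lemma mvmult_sum: "mvmult n A (\<lambda>m. \<Sum>l\<in>L. f l m) r = (\<Sum>l\<in>L. mvmult n A (f l) r)"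
  unfolding mvmult_def by (simp add: sum_distrib_left) (rule sum.swap)

lemma mvmult_mmult: "mvmult n (mmult n A B) y r = mvmult n A (mvmult n B y) r"
  unfolding mvmult_def mmult_def
  by (simp add: sum_distrib_left sum_distrib_right mult.assoc) (rule sum.swap)

lemma mvmult_cong: "(\<And>m. m < n \<Longrightarrow> f m = g m) \<Longrightarrow> mvmult n A f r = mvmult n A g r"
  unfolding mvmult_def by (rule sum.cong) auto

lemma mvmult_diff_rank_one:
  "mvmult n (\<lambda>r m. A r m - p m) y r = mvmult n A y r - (\<Sum>m<n. p m * y m)"
  by (simp add: mvmult_def left_diff_distrib sum_subtractf)

lemma vnorm_mvmult_le_opnorm: "vnorm n (mvmult n M y) \<le> opnorm n M * vnorm n y"
proof (cases "vnorm n y = 0")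
  case True
  then have "\<forall>m<n. y m = 0"
    by (simp add: vnorm_L2 L2_set_eq_0_iff)
  then have "vnorm n (mvmult n M y) = 0"
    by (simp add: mvmult_def vnorm_def)
  then show ?thesis
    using True by simp
next
  case False
  let ?S = "{vnorm n (mvmult n M x) | x. vnorm n x \<le> 1}"
  have bdd: "bdd_above ?S"
  proof (rule bdd_aboveI)
    fix z
    assume "z \<in> ?S"
    then obtain x where z: "z = vnorm n (mvmult n M x)" and x: "vnorm n x \<le> 1"
      by auto
    have "z \<le> sqrt (\<Sum>r<n. \<Sum>m<n. (M r m)\<^sup>2) * vnorm n x"
      using z vnorm_mvmult_le_frobenius by simp
    also have "\<dots> \<le> sqrt (\<Sum>r<n. \<Sum>m<n. (M r m)\<^sup>2)"
      using mult_left_mono[OF x, of "sqrt (\<Sum>r<n. \<Sum>m<n. (M r m)\<^sup>2)"] by (simp add: sum_nonneg)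
    finally show "z \<le> sqrt (\<Sum>r<n. \<Sum>m<n. (M r m)\<^sup>2)" .
  qed
  define c where "c = vnorm n y"
  have c: "c > 0"
    using False vnorm_nonneg[of n y] by (simp add: c_def)
  have "vnorm n (\<lambda>m. (1/c) * y m) = 1"
    unfolding vnorm_scale using c by (simp add: c_def)
  then have "vnorm n (mvmult n M (\<lambda>m. (1/c) * y m)) \<le> opnorm n M"
    unfolding opnorm_def by (intro cSup_upper[OF _ bdd] CollectI exI[of _ "\<lambda>m. (1/c) * y m"]) simp
  moreover have "vnorm n (mvmult n M (\<lambda>m. (1/c) * y m)) = (1/c) * vnorm n (mvmult n M y)"
    unfolding mvmult_scale vnorm_scale using c by simp
  ultimately have "(1/c) * vnorm n (mvmult n M y) \<le> opnorm n M"
    by simp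
  then show ?thesis
    using c by (simp add: c_def field_simps)
qed

definition row_sums_one :: "nat \<Rightarrow> (nat \<Rightarrow> nat \<Rightarrow> real) \<Rightarrow> bool" where
  "row_sums_one n A \<longleftrightarrow> (\<forall>r<n. mvmult n A (\<lambda>_. 1) r = 1)"

lemma row_sums_one_wprod:
  assumes "\<And>l. row_sums_one N (A l)"
  shows "row_sums_one N (wprod N A t n)"
proof (induction n)
  case 0
  then show ?case using assms by simp
next
  case (Suc n)
  have "mvmult N (wprod N A t (Suc n)) (\<lambda>_. 1) r = 1" if "r < N" for r
  proof -
    have "mvmult N (wprod N A t (Suc n)) (\<lambda>_. 1) r
        = mvmult N (A (t + Suc n)) (mvmult N (wprod N A t n) (\<lambda>_. 1)) r"
      by (simp add: mvmult_mmult)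
    also have "\<dots> = mvmult N (A (t + Suc n)) (\<lambda>_. 1) r"
      using Suc by (intro mvmult_cong) (simp add: row_sums_one_def)
    finally show ?thesis
      using assms that by (simp add: row_sums_one_def)
  qed
  then show ?case by (simp add: row_sums_one_def)
qed

lemma Wprod_same: "Wprod N A k k = A k"
  by (simp add: Wprod_def)

lemma Wprod_Suc: "l \<le> k \<Longrightarrow> Wprod N A (Suc k) l = mmult N (A (Suc k)) (Wprod N A k l)"
  by (simp add: Wprod_def Suc_diff_le)

lemma mvmult_Wprod_unroll:
  assumes step: "\<And>k r. r < N \<Longrightarrow> h (Suc k) r = mvmult N (A k) (\<lambda>m. h k m + u k m) r"
    and "r < N"
  shows "h (Suc k) r = mvmult N (Wprod N A k 0) (h 0) r + (\<Sum>l\<le>k. mvmult N (Wprod N A k l) (u l) r)"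
  using \<open>r < N\<close>
proof (induction k arbitrary: r)
  case 0
  then show ?case
    using step by (simp add: Wprod_same mvmult_add)
next
  case (Suc k)
  have "h (Suc (Suc k)) r = mvmult N (A (Suc k)) (\<lambda>m. h (Suc k) m + u (Suc k) m) r"
    using step Suc.prems .
  also have "\<dots> = mvmult N (A (Suc k)) (\<lambda>m. mvmult N (Wprod N A k 0) (h 0) m
      + (\<Sum>l\<le>k. mvmult N (Wprod N A k l) (u l) m) + u (Suc k) m) r"
    using Suc.IH by (intro mvmult_cong) simp
  also have "\<dots> = mvmult N (Wprod N A (Suc k) 0) (h 0) r
      + (\<Sum>l\<le>k. mvmult N (Wprod N A (Suc k) l) (u l) r)
      + mvmult N (Wprod N A (Suc k) (Suc k)) (u (Suc k)) r"
    by (simp add: mvmult_add mvmult_sum mvmult_mmult Wprod_Suc Wprod_same)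
  finally show ?case
    by simp
qed

lemma mvmult_row_sums_one_const:
  "row_sums_one n A \<Longrightarrow> r < n \<Longrightarrow> mvmult n A (\<lambda>m. f m - c) r = mvmult n A f r - c"
  by (simp add: row_sums_one_def mvmult_def right_diff_distrib sum_subtractf sum_distrib_right[symmetric]
      sum_distrib_left[symmetric])

lemma perturbed_deviation_eq:
  assumes rows: "\<And>l. row_sums_one N (A l)"
    and psi: "\<And>t. (\<Sum>m<N. \<psi> t m) = 1"
    and step: "\<And>k r. r < N \<Longrightarrow> h (Suc k) r = mvmult N (A k) (\<lambda>m. h k m + \<delta> k * unit_vec (i k) m) r"
    and i: "\<And>k. i k < N"
    and "r < N"
  defines "hbar0 \<equiv> \<Sum>m<N. \<psi> 0 m * h 0 m"
  shows "h (Suc k) r - (hbar0 + (\<Sum>l\<le>k. \<psi> l (i l) * \<delta> l))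
    = mvmult N (\<lambda>r m. Wprod N A k 0 r m - \<psi> 0 m) (\<lambda>m. h 0 m - hbar0) r
      + (\<Sum>l\<le>k. \<delta> l * mvmult N (\<lambda>r m. Wprod N A k l r m - \<psi> l m) (unit_vec (i l)) r)"
proof -
  have prod_rows: "row_sums_one N (Wprod N A k t)" for t
    unfolding Wprod_def by (rule row_sums_one_wprod[OF rows])
  have centred: "(\<Sum>m<N. \<psi> 0 m * (h 0 m - hbar0)) = 0"
    using psi[of 0] by (simp add: hbar0_def right_diff_distrib sum_subtractf sum_distrib_right[symmetric])
  have "h (Suc k) r = mvmult N (Wprod N A k 0) (h 0) r
      + (\<Sum>l\<le>k. \<delta> l * mvmult N (Wprod N A k l) (unit_vec (i l)) r)"
    using mvmult_Wprod_unroll[where u="\<lambda>l m. \<delta> l * unit_vec (i l) m", OF step \<open>r < N\<close>]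
    by (simp add: mvmult_scale)
  then show ?thesis
    using mvmult_row_sums_one_const[OF prod_rows \<open>r < N\<close>] centred
    by (simp add: mvmult_diff_rank_one sum_unit_vec[OF i] algebra_simps sum.distrib
        sum_subtractf)
qed

lemma perturbed_deviation_bound:
  assumes rows: "\<And>l. row_sums_one N (A l)"
    and psi: "\<And>t. (\<Sum>m<N. \<psi> t m) = 1"
    and contraction: "\<And>k t. t \<le> k \<Longrightarrow>
      opnorm N (\<lambda>r m. Wprod N A k t r m - \<psi> t m) \<le> C * \<rho> ^ (k - t)"
    and step: "\<And>k r. r < N \<Longrightarrow> h (Suc k) r = mvmult N (A k) (\<lambda>m. h k m + \<delta> k * unit_vec (i k) m) r"
    and i: "\<And>k. i k < N"
  defines "hbar0 \<equiv> \<Sum>m<N. \<psi> 0 m * h 0 m"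
  shows "vnorm N (\<lambda>r. h (Suc k) r - (hbar0 + (\<Sum>l\<le>k. \<psi> l (i l) * \<delta> l)))
    \<le> C * \<rho> ^ k * vnorm N (\<lambda>r. h 0 r - hbar0) + C * (\<Sum>l\<le>k. \<rho> ^ (k - l) * \<bar>\<delta> l\<bar>)"
proof -
  define M where "M t = (\<lambda>r m. Wprod N A k t r m - \<psi> t m)" for t
  define f0 where "f0 = mvmult N (M 0) (\<lambda>m. h 0 m - hbar0)"
  define g where "g l = (\<lambda>r. \<delta> l * mvmult N (M l) (unit_vec (i l)) r)" for l
  have "vnorm N (\<lambda>r. h (Suc k) r - (hbar0 + (\<Sum>l\<le>k. \<psi> l (i l) * \<delta> l)))
      = vnorm N (\<lambda>r. f0 r + (\<Sum>l\<le>k. g l r))"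
    using perturbed_deviation_eq[where A=A and \<psi>=\<psi> and h=h and \<delta>=\<delta> and i=i, OF rows psi step i]
    by (intro vnorm_cong) (simp add: f0_def g_def M_def hbar0_def)
  also have "\<dots> \<le> vnorm N f0 + vnorm N (\<lambda>r. \<Sum>l\<le>k. g l r)"
    by (rule vnorm_triangle)
  also have "\<dots> \<le> vnorm N f0 + (\<Sum>l\<le>k. vnorm N (g l))"
    using vnorm_sum_le[of "{..k}" N g] by simp
  also have "vnorm N f0 \<le> C * \<rho> ^ k * vnorm N (\<lambda>m. h 0 m - hbar0)"
  proof -
    have "vnorm N f0 \<le> opnorm N (M 0) * vnorm N (\<lambda>m. h 0 m - hbar0)"
      unfolding f0_def by (rule vnorm_mvmult_le_opnorm)
    also have "\<dots> \<le> C * \<rho> ^ k * vnorm N (\<lambda>m. h 0 m - hbar0)"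
      using contraction[of 0 k] by (intro mult_right_mono) (auto simp: M_def vnorm_nonneg)
    finally show ?thesis .
  qed
  also have "vnorm N (g l) \<le> C * (\<rho> ^ (k - l) * \<bar>\<delta> l\<bar>)" if "l \<le> k" for l
  proof -
    have "vnorm N (g l) \<le> \<bar>\<delta> l\<bar> * (opnorm N (M l) * vnorm N (unit_vec (i l)))"
      unfolding g_def vnorm_scale by (intro mult_left_mono vnorm_mvmult_le_opnorm) auto
    also have "\<dots> \<le> \<bar>\<delta> l\<bar> * (C * \<rho> ^ (k - l))"
      using contraction[OF that] by (simp add: M_def vnorm_unit_vec[OF i] mult_left_mono)
    finally show ?thesis
      by (simp add: mult_ac)
  qed
  then have "(\<Sum>l\<le>k. vnorm N (g l)) \<le> C * (\<Sum>l\<le>k. \<rho> ^ (k - l) * \<bar>\<delta> l\<bar>)"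
    unfolding sum_distrib_left by (rule sum_mono) simp
  finally show ?thesis
    by simp
qed

text \<open>Every row other than the active one copies a single entry: inactive agents keep their
  \<open>x\<close>- and newest \<open>v\<close>-entries, while the rest of the delay line, and the active agent's
  newest \<open>v\<close>-entry, are taken from the block above.\<close>

lemma Waug_passive_row:
  assumes "r \<noteq> ik" "ik < I" "r < (D + 2) * I"
  shows "Waug I D E W ik d r = unit_vec (if r < 2 * I \<and> r \<noteq> ik + I then r else r - I)"
proof
  fix m
  have row: "Waug I D E W ik d r m = (if r = m \<and> r < 2 * I \<and> r \<noteq> ik + I then 1
      else if (2 * I \<le> r \<or> r = ik + I) \<and> m + I = r then 1 else 0)"
    unfolding Waug_def using assms by auto
  show "Waug I D E W ik d r m = unit_vec (if r < 2 * I \<and> r \<noteq> ik + I then r else r - I) m"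
  proof (cases "r < 2 * I \<and> r \<noteq> ik + I")
    case True
    then show ?thesis
      unfolding row unit_vec_def by auto
  next
    case False
    then have "I \<le> r"
      using assms by auto
    then show ?thesis
      unfolding row unit_vec_def using False by auto
  qed
qed

lemma mvmult_Waug_passive_row:
  assumes "r \<noteq> ik" "ik < I" "r < (D + 2) * I"
  shows "mvmult ((D + 2) * I) (Waug I D E W ik d) y r
    = y (if r < 2 * I \<and> r \<noteq> ik + I then r else r - I)"
  using assms
  by (simp add: mvmult_def Waug_passive_row mult.commute[of "unit_vec _ _"] sum_unit_vec
      less_imp_diff_less)

text \<open>\<open>j + (d j + 1) * I\<close> is the position of the value of agent \<open>j\<close> delayed by
  \<open>d j\<close> steps in the stacked state.\<close>

lemma delayed_index_mod: "(j::nat) < I \<Longrightarrow> (j + (d j + 1) * I) mod I = j"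
  using mod_mult_self1[of j "d j + 1" I] by simp

lemma delayed_index_div: "(j::nat) < I \<Longrightarrow> (j + (d j + 1) * I) div I = d j + 1"
  using div_mult_self1[of I j "d j + 1"] by simp

lemma inj_on_delayed_index: "inj_on (\<lambda>j::nat. j + (d j + 1) * I) {..<I}"
  by (rule inj_onI) (metis delayed_index_mod lessThan_iff)

lemma Waug_active_entry:
  assumes "in_nbrs E ik \<subseteq> {..<I}" "ik < I" "j \<in> in_nbrs E ik"
  shows "Waug I D E W ik d ik (j + (d j + 1) * I) = W ik j"
proof -
  have "(THE j'. j' \<in> in_nbrs E ik \<and> j + (d j + 1) * I = j' + (d j' + 1) * I) = j"
  proof (rule the_equality)
    fix j'
    assume "j' \<in> in_nbrs E ik \<and> j + (d j + 1) * I = j' + (d j' + 1) * I"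
    then show "j' = j"
      using inj_onD[OF inj_on_delayed_index[where d=d and I=I], of j' j] assms(1,3) by auto
  qed (use assms(3) in simp)
  moreover have "j + (d j + 1) * I \<noteq> ik"
    using assms(2) by auto
  ultimately show ?thesis
    unfolding Waug_def using assms(3) by auto
qed

lemma Waug_active_zero:
  assumes "m \<noteq> ik" "m \<notin> (\<lambda>j. j + (d j + 1) * I) ` in_nbrs E ik" "ik < I"
  shows "Waug I D E W ik d ik m = 0"
  unfolding Waug_def using assms by auto

lemma mvmult_Waug_active_row:
  assumes nbrs: "in_nbrs E ik \<subseteq> {..<I}" and "ik < I" and "\<And>j. d j \<le> D"
  shows "mvmult ((D + 2) * I) (Waug I D E W ik d) y ik
    = W ik ik * y ik + (\<Sum>j\<in>in_nbrs E ik. W ik j * y (j + (d j + 1) * I))"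
proof -
  let ?pos = "\<lambda>j. j + (d j + 1) * I"
  let ?g = "\<lambda>m. Waug I D E W ik d ik m * y m"
  have fin: "finite (in_nbrs E ik)"
    using nbrs finite_subset by blast
  have pos_bound: "?pos j < (D + 2) * I" if "j < I" for j
  proof -
    have "?pos j < I + (d j + 1) * I"
      using that by simp
    also have "\<dots> \<le> (D + 2) * I"
      using \<open>\<And>j. d j \<le> D\<close>[of j] by (simp add: algebra_simps)
    finally show ?thesis .
  qed
  have ik_notin: "ik \<notin> ?pos ` in_nbrs E ik"
    using \<open>ik < I\<close> by auto
  have "(\<Sum>m<(D + 2) * I. ?g m) = (\<Sum>m\<in>insert ik (?pos ` in_nbrs E ik). ?g m)"
    using nbrs pos_bound \<open>ik < I\<close> Waug_active_zero[OF _ _ \<open>ik < I\<close>]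
    by (intro sum.mono_neutral_right) auto
  also have "\<dots> = ?g ik + (\<Sum>j\<in>in_nbrs E ik. ?g (?pos j))"
    using fin ik_notin inj_on_subset[OF inj_on_delayed_index nbrs]
    by (simp add: sum.reindex)
  also have "\<dots> = W ik ik * y ik + (\<Sum>j\<in>in_nbrs E ik. W ik j * y (?pos j))"
    using Waug_active_entry[OF nbrs \<open>ik < I\<close>] by (simp add: Waug_def)
  finally show ?thesis
    by (simp add: mvmult_def)
qed

lemma row_sums_one_Waug:
  assumes E: "E \<subseteq> {..<I} \<times> {..<I}" "\<forall>i. (i, i) \<notin> E"
    and W: "row_stochastic I W" "\<forall>i<I. \<forall>j<I. W i j \<noteq> 0 \<longrightarrow> i = j \<or> (j, i) \<in> E"
    and "ik < I" "\<And>j. d j \<le> D"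
  shows "row_sums_one ((D + 2) * I) (Waug I D E W ik d)"
  unfolding row_sums_one_def
proof (intro allI impI)
  fix r
  assume r: "r < (D + 2) * I"
  have nbrs: "in_nbrs E ik \<subseteq> {..<I} - {ik}"
    using E by (auto simp: in_nbrs_def)
  show "mvmult ((D + 2) * I) (Waug I D E W ik d) (\<lambda>_. 1) r = 1"
  proof (cases "r = ik")
    case True
    have "(\<Sum>j\<in>in_nbrs E ik. W ik j) = (\<Sum>j\<in>{..<I} - {ik}. W ik j)"
      using nbrs W(2) \<open>ik < I\<close> by (intro sum.mono_neutral_left) (auto simp: in_nbrs_def)
    also have "W ik ik + \<dots> = (\<Sum>j<I. W ik j)"
      using \<open>ik < I\<close> by (simp add: sum.remove[of "{..<I}" ik])
    also have "\<dots> = 1"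
      using W(1) \<open>ik < I\<close> unfolding row_stochastic_def by auto
    moreover have "in_nbrs E ik \<subseteq> {..<I}"
      using nbrs by blast
    ultimately show ?thesis
      using True mvmult_Waug_active_row[where y="\<lambda>_. 1"] \<open>ik < I\<close> \<open>\<And>j. d j \<le> D\<close> by simp
  next
    case False
    then show ?thesis
      using mvmult_Waug_passive_row[where y="\<lambda>_. 1", OF False \<open>ik < I\<close> r] by simp
  qed
qed

lemma stack_newest:
  assumes "I \<le> r" "r < 2 * I"
  shows "stack I x v k r = v (int k) (r - I)"
proof -
  have "r div I = 1" "r mod I = r - I"
    using assms le_div_geq[of I r] le_mod_geq[of I r] by auto
  then show ?thesis
    using assms by (simp add: stack_def)
qed

lemma stack_delayed: "j < I \<Longrightarrow> stack I x v k (j + (e + 1) * I) = v (int k - int e) j"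
  using delayed_index_div[where d="\<lambda>_. e"] delayed_index_mod[where d="\<lambda>_. e"]
  by (simp add: stack_def)

lemma stack_Suc_shift:
  assumes "0 < I" "2 * I \<le> r"
  shows "stack I x v (Suc k) r = stack I x v k (r - I)"
proof -
  define q where "q = (r - I) div I"
  have "q \<ge> 1"
    using assms by (simp add: q_def div_greater_zero_iff Suc_le_eq)
  then have "int (Suc k) - int (q + 1 - 1) = int k - int (q - 1)"
    by simp
  moreover have "r div I = q + 1" "r mod I = (r - I) mod I" "\<not> r - I < I"
    using assms le_div_geq[of I r] le_mod_geq[of I r] by (auto simp: q_def)
  ultimately show ?thesis
    using assms by (simp only: stack_def q_def) simp
qed

lemma stack_step:
  assumes nbrs: "in_nbrs E i \<subseteq> {..<I}" and "i < I" and delays: "\<And>j. d j \<le> D"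
    and v_act: "v (int k + 1) i = x k i + \<delta>"
    and x_act: "x (Suc k) i = W i i * v (int k + 1) i
      + (\<Sum>j\<in>in_nbrs E i. W i j * v (int k - int (d j)) j)"
    and v_pass: "\<And>j. j < I \<Longrightarrow> j \<noteq> i \<Longrightarrow> v (int k + 1) j = v (int k) j"
    and x_pass: "\<And>j. j < I \<Longrightarrow> j \<noteq> i \<Longrightarrow> x (Suc k) j = x k j"
    and r: "r < (D + 2) * I"
  shows "stack I x v (Suc k) r = mvmult ((D + 2) * I) (Waug I D E W i d)
    (\<lambda>m. stack I x v k m + \<delta> * unit_vec i m) r"
    (is "_ = mvmult _ _ ?y r")
proof (cases "r = i")
  case True
  have "?y i = v (int k + 1) i"
    using v_act \<open>i < I\<close> by (simp add: stack_def unit_vec_def)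
  moreover have "?y (j + (d j + 1) * I) = v (int k - int (d j)) j" if "j \<in> in_nbrs E i" for j
    using that nbrs \<open>i < I\<close> stack_delayed[of j I x v k "d j"] by (auto simp: unit_vec_def)
  ultimately show ?thesis
    using True mvmult_Waug_active_row[OF nbrs \<open>i < I\<close> delays, where y="?y"] x_act \<open>i < I\<close>
    by (simp add: stack_def)
next
  case False
  have shift: "mvmult ((D + 2) * I) (Waug I D E W i d) ?y r
      = ?y (if r < 2 * I \<and> r \<noteq> i + I then r else r - I)"
    by (rule mvmult_Waug_passive_row[OF False \<open>i < I\<close> r])
  consider "r < I" | "I \<le> r" "r < 2 * I" "r \<noteq> i + I" | "r = i + I" | "2 * I \<le> r"
    by linarith
  then show ?thesis
  proof cases
    case 1
    then show ?thesis
      using shift False x_pass by (simp add: stack_def unit_vec_def)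
  next
    case 2
    then have "v (1 + int k) (r - I) = v (int k) (r - I)"
      using v_pass[of "r - I"] False by (simp add: add.commute)
    then show ?thesis
      using 2 shift False by (simp add: stack_newest unit_vec_def)
  next
    case 3
    then show ?thesis
      using shift v_act \<open>i < I\<close> by (simp add: stack_newest stack_def unit_vec_def add.commute)
  next
    case 4
    then show ?thesis
      using shift \<open>i < I\<close> by (simp add: stack_Suc_shift[of I] unit_vec_def)
  qed
qed

theorem proposition2:
  fixes I D :: nat
    and E :: "(nat \<times> nat) set"
    and W :: "nat \<Rightarrow> nat \<Rightarrow> real"
    and ag :: "nat \<Rightarrow> nat"
    and d :: "nat \<Rightarrow> nat \<Rightarrow> nat"
    and \<delta> :: "nat \<Rightarrow> real"
    and x :: "nat \<Rightarrow> nat \<Rightarrow> real"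
    and v :: "int \<Rightarrow> nat \<Rightarrow> real"
    and C2 \<rho> :: real
    and \<psi> :: "nat \<Rightarrow> nat \<Rightarrow> real"
    and hbar :: "nat \<Rightarrow> real"
  defines "N \<equiv> (D + 2) * I"
  assumes E_sub: "E \<subseteq> {0..<I} \<times> {0..<I}"
    and E_noloop: "\<forall>i. (i, i) \<notin> E"
    and W_stoch: "row_stochastic I W"
    and W_supp: "\<forall>i<I. \<forall>j<I. W i j \<noteq> 0 \<longrightarrow> i = j \<or> (j, i) \<in> E"
    and ag_range: "\<forall>k. ag k < I"
    and d_bound: "\<forall>k j. d k j \<le> D"
    and v_init: "\<forall>t j. - int D \<le> t \<and> t \<le> 0 \<longrightarrow> v t j = 0"
    and v_act: "\<forall>k. v (int k + 1) (ag k) = x k (ag k) + \<delta> k"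
    and x_act: "\<forall>k. x (Suc k) (ag k) = W (ag k) (ag k) * v (int k + 1) (ag k)
                    + (\<Sum>j\<in>in_nbrs E (ag k). W (ag k) j * v (int k - int (d k j)) j)"
    and v_pass: "\<forall>k j. j < I \<and> j \<noteq> ag k \<longrightarrow> v (int k + 1) j = v (int k) j"
    and x_pass: "\<forall>k j. j < I \<and> j \<noteq> ag k \<longrightarrow> x (Suc k) j = x k j"
    and C2_pos: "C2 > 0"
    and rho: "0 < \<rho>" "\<rho> < 1"
    and psi_stoch: "\<forall>k. stochastic_vec N (\<psi> k)"
    and contraction: "\<forall>k t. t \<le> k \<longrightarrow>
        opnorm N (\<lambda>r m. Wprod N (\<lambda>l. Waug I D E W (ag l) (d l)) k t r m - \<psi> t m)
          \<le> C2 * \<rho> ^ (k - t)"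
    and hbar0: "hbar 0 = (\<Sum>r<N. \<psi> 0 r * stack I x v 0 r)"
    and hbarS: "\<forall>k. hbar (Suc k) = (\<Sum>r<N. \<psi> 0 r * stack I x v 0 r)
                    + (\<Sum>l\<le>k. \<psi> l (ag l) * \<delta> l)"
  shows "\<forall>k. vnorm N (\<lambda>r. stack I x v (Suc k) r - hbar (Suc k))
           \<le> C2 * \<rho> ^ k * vnorm N (\<lambda>r. stack I x v 0 r - hbar 0)
             + C2 * (\<Sum>l\<le>k. \<rho> ^ (k - l) * \<bar>\<delta> l\<bar>)"
proof (intro allI)
  fix k
  let ?A = "\<lambda>l. Waug I D E W (ag l) (d l)"
  have nbrs: "in_nbrs E i \<subseteq> {..<I}" for i
    using E_sub by (auto simp: in_nbrs_def)
  have rows: "row_sums_one N (?A l)" for l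
    unfolding N_def using E_sub E_noloop W_stoch W_supp ag_range d_bound
    by (intro row_sums_one_Waug) auto
  have psi: "(\<Sum>m<N. \<psi> t m) = 1" for t
    using psi_stoch by (simp add: stochastic_vec_def)
  have step: "stack I x v (Suc l) r
      = mvmult N (?A l) (\<lambda>m. stack I x v l m + \<delta> l * unit_vec (ag l) m) r" if "r < N" for l r
    unfolding N_def
    by (rule stack_step[OF nbrs]) (use ag_range d_bound v_act x_act v_pass x_pass that N_def in auto)
  have active: "ag l < N" for l
    using ag_range[rule_format, of l] by (simp add: N_def)
  show "vnorm N (\<lambda>r. stack I x v (Suc k) r - hbar (Suc k))
      \<le> C2 * \<rho> ^ k * vnorm N (\<lambda>r. stack I x v 0 r - hbar 0)
        + C2 * (\<Sum>l\<le>k. \<rho> ^ (k - l) * \<bar>\<delta> l\<bar>)"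
    using perturbed_deviation_bound[where h="stack I x v" and \<psi>=\<psi> and C=C2 and \<rho>=\<rho> and k=k,
        OF rows psi _ step active] contraction hbar0 hbarS
    by simp
qed

end
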